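(* Let $T_1$ be a quadtree in $\mathbb{R}^d$ with $n$ cells. For every $j$ with $1\le j\le d+1$, the set $T_j$ of cells with brand $j$ in the extended quadtree construction has $\mathcal{O}(2^d n)$ cells.
   Context: A quadtree on an axis-aligned root hypercube $R\subset\mathbb{R}^d$ is a hierarchical decomposition in which every node has an associated axis-aligned hypercube (cell) and is either a leaf or has $2^d$ equal-sized children whose cells subdivide its cell. The size $|C|$ of a cell is its edge length. Two cells are neighbors if they are interior-disjoint and share (part of) a $(d-1)$-dimensional facet. For an integer $j$, a cell $C$ is $2^j$-smooth if every leaf neighboring $C$ has size at most $2^j|C|$. Extended quadtree: the cells of a given quadtree $T_1$ are called true cells and get brand $1$. Recursively, for $j\ge1$, let $T^j$ be the quadtree formed by $\bigcup_{i\le j}T_i$, and let $T_{j+1}$ be the minimal set of cells obtained by splitting cells of $T^j$ such that every cell of $T_j$ is $2^j$-smooth in the resulting quadtree; the cells of $T_{j+1}$ get brand $j+1$. The extended quadtree is $T^*=T^{d+1}$. *)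

theory Defs
  imports Complex_Main
begin

text \<open>Dyadic cells of the root hypercube R = [0,1]^d (w.l.o.g., by translation/scaling).
  A cell is a pair (k, a): level k (edge length 1/2^k) and integer coordinates a,
  so that the cell is the product over i<d of [a i / 2^k, (a i + 1) / 2^k].
  Coordinates at positions i >= d are required to be 0 (canonical form).\<close>

type_synonym cell = "nat \<times> (nat \<Rightarrow> nat)"

definition valid_cell :: "nat \<Rightarrow> cell \<Rightarrow> bool" where
  "valid_cell d C \<longleftrightarrow> (\<forall>i<d. snd C i < 2 ^ fst C) \<and> (\<forall>i\<ge>d. snd C i = 0)"

definition root_cell :: cell where
  "root_cell = (0, (\<lambda>_. 0))"

definition cell_size :: "cell \<Rightarrow> real" where
  "cell_size C = 1 / 2 ^ fst C"

definition lo :: "cell \<Rightarrow> nat \<Rightarrow> real" where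
  "lo C i = real (snd C i) / 2 ^ fst C"

definition hi :: "cell \<Rightarrow> nat \<Rightarrow> real" where
  "hi C i = (real (snd C i) + 1) / 2 ^ fst C"

definition children :: "nat \<Rightarrow> cell \<Rightarrow> cell set" where
  "children d C = {(Suc (fst C), b) | b.
      (\<forall>i<d. b i = 2 * snd C i \<or> b i = 2 * snd C i + 1) \<and> (\<forall>i\<ge>d. b i = 0)}"

definition parent :: "cell \<Rightarrow> cell" where
  "parent C = (fst C - 1, (\<lambda>i. snd C i div 2))"

definition is_quadtree :: "nat \<Rightarrow> cell set \<Rightarrow> bool" where
  "is_quadtree d T \<longleftrightarrow> finite T \<and> (\<forall>C\<in>T. valid_cell d C) \<and> root_cell \<in> T \<and>
     (\<forall>C\<in>T. fst C > 0 \<longrightarrow> parent C \<in> T) \<and>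
     (\<forall>C\<in>T. children d C \<inter> T \<noteq> {} \<longrightarrow> children d C \<subseteq> T)"

definition leaves :: "nat \<Rightarrow> cell set \<Rightarrow> cell set" where
  "leaves d T = {C \<in> T. children d C \<inter> T = {}}"

text \<open>Neighbors: interior-disjoint cells sharing part of a (d-1)-dimensional facet, i.e. they
  touch in one coordinate direction and their open extents overlap in all the others.\<close>
definition neighbors :: "nat \<Rightarrow> cell \<Rightarrow> cell \<Rightarrow> bool" where
  "neighbors d C D \<longleftrightarrow> (\<exists>i<d. (hi C i = lo D i \<or> hi D i = lo C i) \<and>
      (\<forall>l<d. l \<noteq> i \<longrightarrow> lo C l < hi D l \<and> lo D l < hi C l))"

definition smooth :: "nat \<Rightarrow> nat \<Rightarrow> cell set \<Rightarrow> cell \<Rightarrow> bool" where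
  "smooth d j Q C \<longleftrightarrow> (\<forall>L\<in>leaves d Q. neighbors d L C \<longrightarrow> cell_size L \<le> 2 ^ j * cell_size C)"

text \<open>Minimal refinement of Tup such that every cell of Tj is 2^j-smooth
  (the family of such refinements is closed under intersection).\<close>
definition min_refinement :: "nat \<Rightarrow> nat \<Rightarrow> cell set \<Rightarrow> cell set \<Rightarrow> cell set" where
  "min_refinement d j Tup Tj =
     \<Inter>{Q. is_quadtree d Q \<and> Tup \<subseteq> Q \<and> (\<forall>C\<in>Tj. smooth d j Q C)}"

text \<open>ext_step d T1 m = (T_{m+1}, T^{m+1}).\<close>
fun ext_step :: "nat \<Rightarrow> cell set \<Rightarrow> nat \<Rightarrow> cell set \<times> cell set" where
  "ext_step d T1 0 = (T1, T1)"
| "ext_step d T1 (Suc m) =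
     (let (Tj, Tup) = ext_step d T1 m;
          new = min_refinement d (Suc m) Tup Tj - Tup
      in (new, Tup \<union> new))"

definition brand :: "nat \<Rightarrow> cell set \<Rightarrow> nat \<Rightarrow> cell set" where
  "brand d T1 j = fst (ext_step d T1 (j - 1))"

end

theory Submission
  imports Defs
begin

text \<open>Every cell split in T^j is split in T_1 or lies within a quarter of its own size of a
  smaller cell that is split in T_1. Indeed, a cell that must be split because it touches a cell C
  of T_j that is more than 2^j times smaller is close to the parent of C, and by induction that
  parent is close to a smaller split cell of T_1; the size gaps absorb the accumulated slack.
  A cell at level l that is close to a split cell of T_1 is close to a split ancestor Y at level
  l + 1, and in each direction only two cells of level l are that close to Y, so a child of Y,
  a cell of T_1, can be charged for it injectively. Hence T^j has at most 2 n split cells and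
  at most 1 + 2^(d+1) n cells.\<close>

lemma hi_eq_lo_add_cell_size: "hi C i = lo C i + cell_size C"
  by (simp add: hi_def lo_def cell_size_def add_divide_distrib)

lemma lo_less_hi: "lo C i < hi C i"
  by (simp add: hi_eq_lo_add_cell_size cell_size_def)

lemma scaled_cell_size_le:
  assumes "fst C + k \<le> fst D + j"
  shows "2 ^ k * cell_size D \<le> 2 ^ j * cell_size C"
proof -
  have "(2::real) ^ (k + fst C) \<le> 2 ^ (j + fst D)"
    using assms by (intro power_increasing) auto
  then show ?thesis
    by (simp add: cell_size_def power_add field_simps)
qed

lemma valid_cell_root: "valid_cell d root_cell"
  by (simp add: valid_cell_def root_cell_def)

lemma valid_cell_level_0: "valid_cell d C \<Longrightarrow> fst C = 0 \<Longrightarrow> C = root_cell"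
  by (cases C) (auto simp: valid_cell_def root_cell_def fun_eq_iff, metis not_less)

lemma children_eq_image:
  "children d E = (\<lambda>S. (Suc (fst E), \<lambda>i. if i < d then 2 * snd E i + (if i \<in> S then 1 else 0) else 0))
     ` Pow {..<d}"
  (is "_ = ?f ` _")
proof
  show "children d E \<subseteq> ?f ` Pow {..<d}"
  proof
    fix D assume "D \<in> children d E"
    then obtain b where D: "D = (Suc (fst E), b)"
      and b: "\<forall>i<d. b i = 2 * snd E i \<or> b i = 2 * snd E i + 1" "\<forall>i\<ge>d. b i = 0"
      unfolding children_def by blast
    have "D = ?f {i. i < d \<and> b i = 2 * snd E i + 1}"
      using b by (auto simp: D fun_eq_iff)
    then show "D \<in> ?f ` Pow {..<d}" by blast
  qed
qed (auto simp: children_def)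

lemma finite_children: "finite (children d E)"
  by (simp add: children_eq_image)

lemma card_children_le: "card (children d E) \<le> 2 ^ d"
  using card_image_le[of "Pow {..<d}"] by (simp add: children_eq_image card_Pow)

lemma children_nonempty: "children d E \<noteq> {}"
  by (auto simp: children_eq_image)

lemma fst_child: "D \<in> children d E \<Longrightarrow> fst D = Suc (fst E)"
  by (auto simp: children_def)

lemma valid_cell_child:
  assumes "valid_cell d E" "D \<in> children d E"
  shows "valid_cell d D"
proof -
  obtain b where D: "D = (Suc (fst E), b)"
    and b: "\<forall>i<d. b i = 2 * snd E i \<or> b i = 2 * snd E i + 1" "\<forall>i\<ge>d. b i = 0"
    using assms(2) unfolding children_def by blast
  have "b i < 2 ^ Suc (fst E)" if "i < d" for i
    using assms(1) b(1) that unfolding valid_cell_def by force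
  then show ?thesis using D b(2) by (simp add: valid_cell_def)
qed

lemma parent_child:
  assumes "valid_cell d E" "D \<in> children d E"
  shows "parent D = E"
proof -
  obtain b where D: "D = (Suc (fst E), b)"
    and b: "\<forall>i<d. b i = 2 * snd E i \<or> b i = 2 * snd E i + 1" "\<forall>i\<ge>d. b i = 0"
    using assms(2) unfolding children_def by blast
  have "b i div 2 = snd E i" for i
    using b assms(1) by (cases "i < d") (auto simp: valid_cell_def)
  then show ?thesis by (simp add: D parent_def prod_eq_iff fun_eq_iff)
qed

lemma child_parent:
  assumes "valid_cell d D" "0 < fst D"
  shows "D \<in> children d (parent D)"
proof -
  have "D = (Suc (fst (parent D)), snd D)"
    using assms(2) by (simp add: parent_def prod_eq_iff)
  moreover have "snd D i = 2 * (snd D i div 2) \<or> snd D i = 2 * (snd D i div 2) + 1" for i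
    by presburger
  ultimately show ?thesis
    using assms(1) unfolding children_def valid_cell_def parent_def by auto
qed

lemma parent_encloses:
  assumes "0 < fst C"
  shows "lo (parent C) i \<le> lo C i \<and> hi C i \<le> hi (parent C) i"
proof -
  obtain k where k: "fst C = Suc k" using assms by (cases "fst C") auto
  define a where "a = snd C i"
  have "real (a div 2 * 2) \<le> real a" "real (a + 1) \<le> real ((a div 2 + 1) * 2)"
    unfolding of_nat_le_iff by presburger+
  then have r: "real (a div 2) * 2 \<le> real a" "real a + 1 \<le> (real (a div 2) + 1) * 2"
    by simp_all
  have "lo (parent C) i = real (a div 2) * 2 / 2 ^ Suc k" "lo C i = real a / 2 ^ Suc k"
    "hi C i = (real a + 1) / 2 ^ Suc k" "hi (parent C) i = (real (a div 2) + 1) * 2 / 2 ^ Suc k"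
    by (simp_all add: lo_def hi_def parent_def k a_def field_simps)
  then show ?thesis
    by (simp only:) (intro conjI divide_right_mono r zero_le_power; simp)
qed

lemma finite_valid_cells_upto_level: "finite {C. valid_cell d C \<and> fst C \<le> M}"
proof -
  let ?f = "\<lambda>(k, xs). (k, \<lambda>i. if i < d then xs ! i else (0::nat))"
  let ?A = "{..M} \<times> {xs. set xs \<subseteq> {..<2 ^ M :: nat} \<and> length xs = d}"
  have "{C. valid_cell d C \<and> fst C \<le> M} \<subseteq> ?f ` ?A"
  proof
    fix C assume C: "C \<in> {C. valid_cell d C \<and> fst C \<le> M}"
    obtain k a where Ck: "C = (k, a)" by fastforce
    have "a i < 2 ^ M" if "i < d" for i
      using C that less_le_trans[OF _ power_increasing[of k M "2::nat"]]
      by (auto simp: Ck valid_cell_def)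
    moreover have "a = (\<lambda>i. if i < d then map a [0..<d] ! i else 0)"
      using C by (auto simp: Ck valid_cell_def fun_eq_iff)
    ultimately show "C \<in> ?f ` ?A"
      using C by (intro image_eqI[of _ _ "(k, map a [0..<d])"]) (auto simp: Ck)
  qed
  moreover have "finite ?A"
    by (intro finite_cartesian_product finite_lists_length_eq) auto
  ultimately show ?thesis by (meson finite_imageI finite_subset)
qed

definition internal :: "nat \<Rightarrow> cell set \<Rightarrow> cell set" where
  "internal d T = {C \<in> T. children d C \<inter> T \<noteq> {}}"

lemma quadtreeD:
  assumes "is_quadtree d T"
  shows "finite T" "root_cell \<in> T" "C \<in> T \<Longrightarrow> valid_cell d C"
    "C \<in> T \<Longrightarrow> 0 < fst C \<Longrightarrow> parent C \<in> T"
    "C \<in> internal d T \<Longrightarrow> children d C \<subseteq> T"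
  using assms by (auto simp: is_quadtree_def internal_def)

lemma parent_in_internal:
  assumes "is_quadtree d T" "C \<in> T" "0 < fst C"
  shows "parent C \<in> internal d T"
proof -
  have "C \<in> children d (parent C)"
    using child_parent quadtreeD(3)[OF assms(1,2)] assms(3) by simp
  then show ?thesis
    using quadtreeD(4)[OF assms] assms(2) by (auto simp: internal_def)
qed

lemma quadtree_subset_children_of_internal:
  assumes "is_quadtree d T"
  shows "T \<subseteq> insert root_cell (\<Union>E\<in>internal d T. children d E)"
proof
  fix D assume D: "D \<in> T"
  show "D \<in> insert root_cell (\<Union>E\<in>internal d T. children d E)"
  proof (cases "fst D = 0")
    case True
    then show ?thesis using valid_cell_level_0 quadtreeD(3)[OF assms D] by simp
  next
    case False
    then show ?thesis
      using parent_in_internal[OF assms D] child_parent quadtreeD(3)[OF assms D] by blast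
  qed
qed

lemma card_quadtree_le:
  assumes "is_quadtree d T"
  shows "card T \<le> 1 + 2 ^ d * card (internal d T)"
proof -
  have fin: "finite (internal d T)"
    using quadtreeD(1)[OF assms] by (simp add: internal_def)
  have "card T \<le> card (insert root_cell (\<Union>E\<in>internal d T. children d E))"
    using quadtree_subset_children_of_internal[OF assms] fin finite_children
    by (intro card_mono) auto
  also have "\<dots> \<le> 1 + card (\<Union>E\<in>internal d T. children d E)"
    by (simp add: card_insert_le_m1 card_insert_if)
  also have "card (\<Union>E\<in>internal d T. children d E) \<le> (\<Sum>E\<in>internal d T. card (children d E))"
    using fin by (rule card_UN_le)
  also have "\<dots> \<le> (\<Sum>E\<in>internal d T. 2 ^ d)"
    by (intro sum_mono card_children_le)
  finally show ?thesis by (simp add: mult.commute)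
qed

lemma is_quadtree_Inter:
  assumes "F \<noteq> {}" "\<And>Q. Q \<in> F \<Longrightarrow> is_quadtree d Q"
  shows "is_quadtree d (\<Inter>F)"
proof -
  obtain Q0 where Q0: "Q0 \<in> F" using assms(1) by blast
  have "children d C \<subseteq> \<Inter>F" if "children d C \<inter> \<Inter>F \<noteq> {}" "C \<in> \<Inter>F" for C
    using that assms(2) unfolding is_quadtree_def by blast
  moreover have "finite (\<Inter>F)"
    using Q0 assms(2)[OF Q0] by (meson Inter_lower finite_subset quadtreeD(1))
  ultimately show ?thesis
    using Q0 assms(2) unfolding is_quadtree_def by blast
qed

inductive_set split_closure :: "nat \<Rightarrow> cell set \<Rightarrow> cell set" for d X where
  root: "root_cell \<in> split_closure d X"
| split: "E \<in> split_closure d X \<Longrightarrow> E \<in> X \<Longrightarrow> D \<in> children d E \<Longrightarrow> D \<in> split_closure d X"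

lemma split_closure_valid: "D \<in> split_closure d X \<Longrightarrow> valid_cell d D"
  by (induction rule: split_closure.induct) (auto intro: valid_cell_root valid_cell_child)

lemma split_closure_parent:
  assumes "D \<in> split_closure d X" "0 < fst D"
  shows "parent D \<in> split_closure d X \<and> parent D \<in> X"
  using assms
proof (cases rule: split_closure.cases)
  case root
  then show ?thesis using assms by (simp add: root_cell_def)
next
  case (split E)
  then show ?thesis using parent_child split_closure_valid by metis
qed

lemma split_closure_internal_subset:
  assumes "valid_cell d E" "children d E \<inter> split_closure d X \<noteq> {}"
  shows "E \<in> X"
proof -
  obtain D where D: "D \<in> children d E" "D \<in> split_closure d X" using assms(2) by blast
  then show ?thesis
    using split_closure_parent[OF D(2)] fst_child parent_child[OF assms(1)] by fastforce
qed

lemma is_quadtree_split_closure: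
  assumes "finite X"
  shows "is_quadtree d (split_closure d X)"
proof -
  have "split_closure d X \<subseteq> insert root_cell (\<Union>E\<in>X. children d E)"
    by (auto elim: split_closure.cases)
  then have "finite (split_closure d X)"
    by (rule finite_subset) (use assms finite_children in auto)
  moreover have "children d C \<subseteq> split_closure d X"
    if "C \<in> split_closure d X" "children d C \<inter> split_closure d X \<noteq> {}" for C
    using that split_closure_internal_subset[OF split_closure_valid] split_closure.split by blast
  ultimately show ?thesis
    unfolding is_quadtree_def
    using split_closure_valid split_closure_parent split_closure.root by blast
qed

lemma quadtree_subset_split_closure:
  assumes "is_quadtree d T" "internal d T \<subseteq> X"
  shows "T \<subseteq> split_closure d X"
proof -
  have "D \<in> split_closure d X" if "D \<in> T" "fst D = k" for D k
    using that
  proof (induction k arbitrary: D)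
    case 0
    then show ?case
      using valid_cell_level_0 quadtreeD(3)[OF assms(1)] split_closure.root by metis
  next
    case (Suc k)
    have "parent D \<in> internal d T"
      using parent_in_internal[OF assms(1) Suc.prems(1)] Suc.prems(2) by simp
    then have "parent D \<in> X" "parent D \<in> split_closure d X"
      using assms(2) Suc.IH[of "parent D"] Suc.prems(2) by (auto simp: internal_def parent_def)
    moreover have "D \<in> children d (parent D)"
      using child_parent quadtreeD(3)[OF assms(1)] Suc.prems by simp
    ultimately show ?case
      by (meson split_closure.split)
  qed
  then show ?thesis by blast
qed

lemma internal_ancestor:
  assumes "is_quadtree d T" "Y \<in> internal d T" "l \<le> fst Y"
  shows "\<exists>Y'\<in>internal d T. fst Y' = l \<and> (\<forall>i. lo Y' i \<le> lo Y i \<and> hi Y i \<le> hi Y' i)"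
  using assms(2,3)
proof (induction "fst Y - l" arbitrary: Y)
  case 0
  then show ?case by auto
next
  case (Suc n)
  have pos: "0 < fst Y" and lev: "l \<le> fst (parent Y)" "fst (parent Y) - l = n"
    using Suc by (auto simp: parent_def)
  have "parent Y \<in> internal d T"
    using parent_in_internal[OF assms(1) _ pos] Suc.prems(1) by (simp add: internal_def)
  then obtain Y' where "Y' \<in> internal d T" "fst Y' = l"
    "\<forall>i. lo Y' i \<le> lo (parent Y) i \<and> hi (parent Y) i \<le> hi Y' i"
    using Suc.hyps(1)[OF lev(2)[symmetric]] lev(1) by blast
  moreover have "lo Y' i \<le> lo Y i \<and> hi Y i \<le> hi Y' i" if
    "\<forall>i. lo Y' i \<le> lo (parent Y) i \<and> hi (parent Y) i \<le> hi Y' i" for Y' i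
    using that[rule_format, of i] parent_encloses[OF pos, of i] by (meson order_trans)
  ultimately show ?case by blast
qed

definition close_within :: "nat \<Rightarrow> real \<Rightarrow> cell \<Rightarrow> cell \<Rightarrow> bool" where
  "close_within d \<delta> Y P \<longleftrightarrow>
     (\<forall>i<d. lo Y i \<le> hi P i + \<delta> * cell_size P \<and> lo P i \<le> hi Y i + \<delta> * cell_size P)"

definition near_finer_internal :: "nat \<Rightarrow> cell set \<Rightarrow> real \<Rightarrow> cell \<Rightarrow> bool" where
  "near_finer_internal d T \<delta> P \<longleftrightarrow> (\<exists>Y\<in>internal d T. fst P < fst Y \<and> close_within d \<delta> Y P)"

lemma close_within_mono:
  assumes "close_within d \<delta> Y P" "\<delta> \<le> \<delta>'"
  shows "close_within d \<delta>' Y P"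
proof -
  have "\<delta> * cell_size P \<le> \<delta>' * cell_size P"
    using assms(2) by (intro mult_right_mono) (simp_all add: cell_size_def)
  then show ?thesis
    using assms(1) unfolding close_within_def by force
qed

lemma near_finer_internal_mono:
  "near_finer_internal d T \<delta> P \<Longrightarrow> \<delta> \<le> \<delta>' \<Longrightarrow> near_finer_internal d T \<delta>' P"
  unfolding near_finer_internal_def using close_within_mono by blast

lemma close_within_enlarge:
  assumes "close_within d \<delta> Y P" "\<And>i. i < d \<Longrightarrow> lo Y' i \<le> lo Y i \<and> hi Y i \<le> hi Y' i"
  shows "close_within d \<delta> Y' P"
  unfolding close_within_def
proof (intro allI impI)
  fix i assume "i < d"
  then show "lo Y' i \<le> hi P i + \<delta> * cell_size P \<and> lo P i \<le> hi Y' i + \<delta> * cell_size P"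
    using assms unfolding close_within_def by (smt (verit))
qed

lemma neighbors_close_within_0: "neighbors d P C \<Longrightarrow> close_within d 0 C P"
  unfolding neighbors_def close_within_def using lo_less_hi by (smt (verit))

lemma close_within_through_enclosing:
  assumes "close_within d \<delta> Y Z" "\<And>i. i < d \<Longrightarrow> lo Z i \<le> lo C i \<and> hi C i \<le> hi Z i"
    and "close_within d 0 C P" "(1 + \<delta>) * cell_size Z \<le> \<epsilon> * cell_size P"
  shows "close_within d \<epsilon> Y P"
  unfolding close_within_def
proof (intro allI impI)
  fix i assume "i < d"
  then have "lo Y i \<le> hi Z i + \<delta> * cell_size Z" "lo Z i \<le> hi Y i + \<delta> * cell_size Z"
    "lo Z i \<le> lo C i" "hi C i \<le> hi Z i" "lo C i \<le> hi P i" "lo P i \<le> hi C i"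
    using assms(1-3) unfolding close_within_def by auto
  then show "lo Y i \<le> hi P i + \<epsilon> * cell_size P \<and> lo P i \<le> hi Y i + \<epsilon> * cell_size P"
    using assms(4) hi_eq_lo_add_cell_size[of Z i] lo_less_hi[of C i] by (simp add: algebra_simps)
qed

lemma close_within_coarser_coordinates:
  assumes "close_within d (1/4) Y P" "fst Y = Suc (fst P)" "i < d"
  shows "snd Y i \<le> 2 * snd P i + 2 \<and> 2 * snd P i \<le> snd Y i + 1"
proof -
  define y e s where "y = real (snd Y i)" "e = real (snd P i)" "s = (2::real) ^ fst P"
  have "y / (2 * s) \<le> (e + 1) / s + 1/4 * (1 / s)" "e / s \<le> (y + 1) / (2 * s) + 1/4 * (1 / s)"
    using assms unfolding close_within_def lo_def hi_def cell_size_def y_e_s_def by auto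
  moreover have "s > 0" by (simp add: y_e_s_def)
  ultimately have "s * (2 * y) \<le> s * (4 * e + 5)" "4 * e \<le> 2 * y + 3"
    by (simp_all add: field_simps)
  then have "2 * y \<le> 4 * e + 5" "4 * e \<le> 2 * y + 3"
    using \<open>s > 0\<close> mult_le_cancel_left_pos by blast+
  then show ?thesis unfolding y_e_s_def by linarith
qed

text \<open>A cell at level l within a quarter of its size of a cell Y at level l + 1 with
  coordinates y has, in each direction, coordinate (y + 1) div 2 - 1 or (y + 1) div 2. The child
  of Y whose coordinates have the corresponding parities pays for it; coarse_partner maps the
  child back, so no child pays twice.\<close>
definition coarse_partner :: "nat \<Rightarrow> cell \<Rightarrow> cell" where
  "coarse_partner d D = (fst D - 2, \<lambda>i. if i < d then
       (if odd (snd D i) then (snd D i div 2 + 1) div 2 else (snd D i div 2 + 1) div 2 - 1) else 0)"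

lemma close_within_coarser_in_partner_image:
  assumes "close_within d (1/4) Y P" "fst Y = Suc (fst P)" "valid_cell d P"
  shows "P \<in> coarse_partner d ` children d Y"
proof -
  define b where "b i = (if snd P i = (snd Y i + 1) div 2 then 1 else 0 :: nat)" for i
  define D where "D = (Suc (fst Y), \<lambda>i. if i < d then 2 * snd Y i + b i else 0)"
  have "D \<in> children d Y"
    unfolding children_def D_def b_def by auto
  moreover have "coarse_partner d D = P"
  proof -
    have "snd (coarse_partner d D) i = snd P i" for i
    proof (cases "i < d")
      case True
      then show ?thesis
        using close_within_coarser_coordinates[OF assms(1,2) True]
        by (auto simp: coarse_partner_def D_def b_def)
    next
      case False
      then show ?thesis using assms(3) by (simp add: coarse_partner_def valid_cell_def)
    qed
    then show ?thesis
      using assms(2) by (simp add: coarse_partner_def D_def prod_eq_iff fun_eq_iff)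
  qed
  ultimately show ?thesis by blast
qed

lemma near_finer_internal_in_partner_image:
  assumes "is_quadtree d T" "near_finer_internal d T (1/4) P" "valid_cell d P"
  shows "P \<in> coarse_partner d ` T"
proof -
  obtain Y where Y: "Y \<in> internal d T" "fst P < fst Y" "close_within d (1/4) Y P"
    using assms(2) unfolding near_finer_internal_def by blast
  obtain Y' where Y': "Y' \<in> internal d T" "fst Y' = Suc (fst P)"
    "\<forall>i. lo Y' i \<le> lo Y i \<and> hi Y i \<le> hi Y' i"
    using internal_ancestor[OF assms(1) Y(1), of "Suc (fst P)"] Y(2) by auto
  have "P \<in> coarse_partner d ` children d Y'"
    using close_within_enlarge[OF Y(3)] Y' close_within_coarser_in_partner_image assms(3) by blast
  then show ?thesis using quadtreeD(5)[OF assms(1) Y'(1)] by blast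
qed

lemma card_internal_le_if_near:
  assumes "is_quadtree d T" "is_quadtree d Q"
    and "\<And>E. E \<in> internal d Q \<Longrightarrow> E \<in> internal d T \<or> near_finer_internal d T (1/4) E"
  shows "card (internal d Q) \<le> 2 * card T"
proof -
  have fin: "finite T" using quadtreeD(1)[OF assms(1)] .
  have "internal d Q \<subseteq> T \<union> coarse_partner d ` T"
    using assms(3) near_finer_internal_in_partner_image[OF assms(1)] quadtreeD(3)[OF assms(2)]
    by (fastforce simp: internal_def)
  then have "card (internal d Q) \<le> card (T \<union> coarse_partner d ` T)"
    using fin by (intro card_mono) auto
  also have "\<dots> \<le> card T + card (coarse_partner d ` T)"
    by (rule card_Un_le)
  also have "\<dots> \<le> 2 * card T"
    using card_image_le[OF fin] by simp
  finally show ?thesis .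
qed

definition coarse_neighbors :: "nat \<Rightarrow> nat \<Rightarrow> cell set \<Rightarrow> cell set" where
  "coarse_neighbors d j S = {P. valid_cell d P \<and> (\<exists>C\<in>S. fst P + j < fst C \<and> neighbors d P C)}"

lemma finite_coarse_neighbors:
  assumes "finite S"
  shows "finite (coarse_neighbors d j S)"
proof -
  have "coarse_neighbors d j S \<subseteq> (\<Union>C\<in>S. {P. valid_cell d P \<and> fst P \<le> fst C})"
    unfolding coarse_neighbors_def by force
  then show ?thesis
    using assms finite_valid_cells_upto_level by (simp add: finite_subset)
qed

lemma smooth_if_leaves_not_coarse_neighbors:
  assumes "leaves d Q \<inter> coarse_neighbors d j S = {}" "C \<in> S" "\<forall>L\<in>Q. valid_cell d L"
  shows "smooth d j Q C"
  unfolding smooth_def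
proof (intro ballI impI)
  fix L assume L: "L \<in> leaves d Q" "neighbors d L C"
  have "L \<notin> coarse_neighbors d j S"
    using assms(1) L(1) by blast
  then have "fst C \<le> fst L + j"
    using L assms(2,3) by (auto simp: coarse_neighbors_def leaves_def)
  then show "cell_size L \<le> 2 ^ j * cell_size C"
    using scaled_cell_size_le[of C 0 L j] by simp
qed

lemma min_refinement_structure:
  fixes j :: nat
  assumes "is_quadtree d Tup" "finite S"
  defines "R \<equiv> min_refinement d j Tup S"
  shows "is_quadtree d R" "Tup \<subseteq> R" "internal d R \<subseteq> internal d Tup \<union> coarse_neighbors d j S"
proof -
  define X where "X = internal d Tup \<union> coarse_neighbors d j S"
  define G where "G = split_closure d X"
  have "finite X"
    using quadtreeD(1)[OF assms(1)] finite_coarse_neighbors[OF assms(2)]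
    by (simp add: X_def internal_def)
  then have qG: "is_quadtree d G"
    unfolding G_def by (rule is_quadtree_split_closure)
  have "L \<notin> X" if "L \<in> leaves d G" for L
  proof
    assume "L \<in> X"
    then have "children d L \<subseteq> G"
      using that split_closure.split[of L d X] by (auto simp: leaves_def G_def)
    then show False
      using that children_nonempty[of d L] by (auto simp: leaves_def)
  qed
  then have "leaves d G \<inter> X = {}" by blast
  then have "smooth d j G C" if "C \<in> S" for C
    using that quadtreeD(3)[OF qG]
    by (intro smooth_if_leaves_not_coarse_neighbors[of d G j S]) (auto simp: X_def)
  moreover have "Tup \<subseteq> G"
    unfolding G_def X_def by (rule quadtree_subset_split_closure[OF assms(1)]) simp
  ultimately have GF: "G \<in> {Q. is_quadtree d Q \<and> Tup \<subseteq> Q \<and> (\<forall>C\<in>S. smooth d j Q C)}"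
    using qG by blast
  then show qR: "is_quadtree d R" and "Tup \<subseteq> R"
    unfolding R_def min_refinement_def by (blast intro: is_quadtree_Inter)+
  have "R \<subseteq> G"
    using GF unfolding R_def min_refinement_def by blast
  show "internal d R \<subseteq> internal d Tup \<union> coarse_neighbors d j S"
  proof
    fix E assume E: "E \<in> internal d R"
    then have "children d E \<inter> G \<noteq> {}"
      using \<open>R \<subseteq> G\<close> by (auto simp: internal_def)
    then show "E \<in> internal d Tup \<union> coarse_neighbors d j S"
      using split_closure_internal_subset quadtreeD(3)[OF qR] E
      unfolding G_def X_def internal_def by blast
  qed
qed

lemma new_cell_parent:
  assumes "is_quadtree d Q" "is_quadtree d T" "T \<subseteq> Q" "internal d Q \<subseteq> internal d T \<union> N"
    and "C \<in> Q" "C \<notin> T"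
  shows "0 < fst C \<and> parent C \<in> N"
proof -
  have pos: "0 < fst C"
    using assms(5,6) quadtreeD(2)[OF assms(2)] valid_cell_level_0 quadtreeD(3)[OF assms(1)] by blast
  have "C \<in> children d (parent C)"
    using child_parent quadtreeD(3)[OF assms(1) assms(5)] pos by blast
  then have "parent C \<notin> internal d T"
    using quadtreeD(5)[OF assms(2)] assms(6) by blast
  then show ?thesis
    using parent_in_internal[OF assms(1,5) pos] assms(4) pos by blast
qed

text \<open>Tj and Tup stand for T_(m+1) and T^(m+1). The slack is 0 at m = 1 because the cells
  split to make T_1 smooth touch a cell of T_1, whose parent is split in T_1. At the next step the
  size gap 4 between a split cell and the parent of the much smaller cell it touches absorbs
  slack 0 only; from then on the gap is at least 8, which absorbs slack 1/4.\<close>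
definition slack :: "nat \<Rightarrow> real" where
  "slack m = (if m \<le> 1 then 0 else 1/4)"

definition extension_invariant :: "nat \<Rightarrow> cell set \<Rightarrow> nat \<Rightarrow> cell set \<Rightarrow> cell set \<Rightarrow> bool" where
  "extension_invariant d T1 m Tj Tup \<longleftrightarrow> is_quadtree d Tup \<and> Tj \<subseteq> Tup \<and>
     (\<forall>E\<in>internal d Tup. E \<in> internal d T1 \<or> near_finer_internal d T1 (1/4) E) \<and>
     (m = 0 \<longrightarrow> Tj = T1) \<and>
     (0 < m \<longrightarrow> (\<forall>C\<in>Tj. 0 < fst C \<and> near_finer_internal d T1 (slack m) (parent C)))"

lemma coarse_neighbor_near:
  assumes "is_quadtree d T1" "extension_invariant d T1 m Tj Tup"
    and "P \<in> coarse_neighbors d (Suc m) Tj"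
  shows "near_finer_internal d T1 (slack (Suc m)) P"
proof -
  obtain C where C: "C \<in> Tj" "fst P + Suc m < fst C" "close_within d 0 C P"
    using assms(3) neighbors_close_within_0 unfolding coarse_neighbors_def by blast
  have pos: "0 < fst C" and lev: "fst P + Suc m \<le> fst (parent C)"
    using C(2) by (auto simp: parent_def)
  have enclose: "\<And>i. lo (parent C) i \<le> lo C i \<and> hi C i \<le> hi (parent C) i"
    using parent_encloses[OF pos] by blast
  show ?thesis
  proof (cases "m = 0")
    case True
    then have "parent C \<in> internal d T1"
      using assms(2) C(1) parent_in_internal[OF assms(1) _ pos] by (simp add: extension_invariant_def)
    moreover have "close_within d 0 (parent C) P"
      using close_within_enlarge[OF C(3)] enclose by blast
    ultimately show ?thesis
      using lev True unfolding near_finer_internal_def slack_def by (auto simp: Suc_le_eq)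
  next
    case False
    then obtain Y where Y: "Y \<in> internal d T1" "fst (parent C) < fst Y"
      "close_within d (slack m) Y (parent C)"
      using assms(2) C(1) unfolding extension_invariant_def near_finer_internal_def by auto
    have "(1 + slack m) * cell_size (parent C) \<le> 1/4 * cell_size P"
    proof (cases "m = 1")
      case True
      then show ?thesis
        using lev scaled_cell_size_le[of P 2 "parent C" 0] by (simp add: slack_def)
    next
      case False
      then have "8 * cell_size (parent C) \<le> cell_size P"
        using lev \<open>m \<noteq> 0\<close> scaled_cell_size_le[of P 3 "parent C" 0] by simp
      moreover have "0 \<le> cell_size (parent C)"
        by (simp add: cell_size_def)
      ultimately show ?thesis
        using False \<open>m \<noteq> 0\<close> by (simp add: slack_def)
    qed
    then have "close_within d (1/4) Y P"
      using close_within_through_enclosing[OF Y(3) _ C(3)] enclose by blast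
    moreover have "fst P < fst Y"
      using Y(2) lev by linarith
    ultimately show ?thesis
      using Y(1) False unfolding near_finer_internal_def slack_def by auto
  qed
qed

lemma extension_invariant_step:
  assumes "is_quadtree d T1" "extension_invariant d T1 m Tj Tup"
  defines "R \<equiv> min_refinement d (Suc m) Tup Tj"
  shows "extension_invariant d T1 (Suc m) (R - Tup) (Tup \<union> (R - Tup))"
proof -
  have qTup: "is_quadtree d Tup" and "Tj \<subseteq> Tup"
    and near: "\<And>E. E \<in> internal d Tup \<Longrightarrow> E \<in> internal d T1 \<or> near_finer_internal d T1 (1/4) E"
    using assms(2) unfolding extension_invariant_def by auto
  then have "finite Tj"
    using quadtreeD(1) finite_subset by blast
  note R = min_refinement_structure[OF qTup this, of "Suc m", folded R_def]
  have slack: "slack (Suc m) \<le> 1/4"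
    by (simp add: slack_def)
  have "E \<in> internal d T1 \<or> near_finer_internal d T1 (1/4) E" if "E \<in> internal d R" for E
  proof -
    have "E \<in> internal d Tup \<or> E \<in> coarse_neighbors d (Suc m) Tj"
      using R(3) that by blast
    then show ?thesis
      using near coarse_neighbor_near[OF assms(1,2)] near_finer_internal_mono[OF _ slack] by blast
  qed
  moreover have "0 < fst C \<and> near_finer_internal d T1 (slack (Suc m)) (parent C)"
    if "C \<in> R - Tup" for C
    using new_cell_parent[OF R(1) qTup R(2,3)] that coarse_neighbor_near[OF assms(1,2)] by blast
  moreover have "Tup \<union> (R - Tup) = R"
    using R(2) by blast
  ultimately show ?thesis
    using R(1) unfolding extension_invariant_def by auto
qed

lemma extension_invariant_ext_step:
  assumes "is_quadtree d T1"
  shows "extension_invariant d T1 m (fst (ext_step d T1 m)) (snd (ext_step d T1 m))"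
proof (induction m)
  case 0
  then show ?case using assms by (simp add: extension_invariant_def)
next
  case (Suc m)
  obtain Tj Tup where e: "ext_step d T1 m = (Tj, Tup)" by fastforce
  have "extension_invariant d T1 (Suc m) (min_refinement d (Suc m) Tup Tj - Tup)
      (Tup \<union> (min_refinement d (Suc m) Tup Tj - Tup))"
    using Suc.IH e extension_invariant_step[OF assms] by simp
  then show ?case using e by simp
qed

lemma card_brand_le:
  assumes "is_quadtree d T1"
  shows "finite (brand d T1 j) \<and> card (brand d T1 j) \<le> 3 * 2 ^ d * card T1"
proof -
  define Tup where "Tup = snd (ext_step d T1 (j - 1))"
  have "extension_invariant d T1 (j - 1) (brand d T1 j) Tup"
    unfolding brand_def Tup_def by (rule extension_invariant_ext_step[OF assms])
  then have qTup: "is_quadtree d Tup" and sub: "brand d T1 j \<subseteq> Tup"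
    and "card (internal d Tup) \<le> 2 * card T1"
    using card_internal_le_if_near[OF assms] unfolding extension_invariant_def by auto
  have "1 \<le> 2 ^ d * card T1"
    using quadtreeD(1,2)[OF assms] by (simp add: Suc_le_eq card_gt_0_iff) blast
  have "card Tup \<le> 1 + 2 ^ d * card (internal d Tup)"
    by (rule card_quadtree_le[OF qTup])
  also have "\<dots> \<le> 1 + 2 ^ d * (2 * card T1)"
    using \<open>card (internal d Tup) \<le> 2 * card T1\<close> by simp
  also have "\<dots> \<le> 3 * 2 ^ d * card T1"
    using \<open>1 \<le> 2 ^ d * card T1\<close> by simp
  finally have "card Tup \<le> 3 * 2 ^ d * card T1" .
  then show ?thesis
    using sub quadtreeD(1)[OF qTup] card_mono[of Tup "brand d T1 j"] finite_subset by fastforce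
qed

theorem lemma13:
  shows "\<exists>c::real. \<forall>d::nat. \<forall>T1. d \<ge> 1 \<longrightarrow> is_quadtree d T1 \<longrightarrow>
           (\<forall>j\<in>{1..d+1}. finite (brand d T1 j) \<and>
              real (card (brand d T1 j)) \<le> c * 2 ^ d * real (card T1))"
proof (intro exI[of _ 3] allI impI ballI)
  fix d j :: nat and T1
  assume "is_quadtree d T1"
  then have "finite (brand d T1 j)" "card (brand d T1 j) \<le> 3 * 2 ^ d * card T1"
    using card_brand_le by blast+
  then show "finite (brand d T1 j) \<and> real (card (brand d T1 j)) \<le> 3 * 2 ^ d * real (card T1)"
    by (simp add: of_nat_mono[where 'a=real, of _ "3 * 2 ^ d * card T1", simplified])
qed

end
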